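(* For a real Banach space $X$ the following are equivalent: (a) $X$ has the Kadec-Klee property; (b) for every nonempty closed convex subset $V$ of $X$, if $(X,V,\mathcal{F}(X))$ has weak-$\mathscr{F}_{cwm}$-SACP, then $(X,V,\mathcal{F}(X))$ has $\mathscr{F}_{cwm}$-SACP (with respect to the norm topology); here $\mathcal{F}(X)$ is the family of nonempty finite subsets of $X$ and $\mathscr{F}_{cwm}$ is the class of all convex, weakly strictly monotone functions $f:\ell_\infty^+(F)\to[0,\infty)$, $F\in\mathcal{F}(X)$.
   Context: $X$ has the Kadec-Klee property if $x,x_n\in S_X$ and $x_n\to x$ weakly imply $x_n\to x$ in norm. For finite $F=\{x_1,\dots,x_N\}$, $\ell_\infty^+(F)$ is identified with $[0,\infty)^N$ with the coordinatewise order. $f$ is monotone if $\varphi_1\le\varphi_2$ implies $f(\varphi_1)\le f(\varphi_2)$; weakly strictly monotone if monotone and $\varphi_1(t)<\varphi_2(t)$ for all $t$ implies $f(\varphi_1)<f(\varphi_2)$. $r_f(x,F)=f(\|x-x_1\|,\dots,\|x-x_N\|)$, $\mathrm{rad}_V^f(F)=\inf_{v\in V}r_f(v,F)$. For $\tau$ the norm or weak topology, $(X,V,\mathfrak{F})$ has $\tau$-$\mathscr{F}$-SACP if for every $F\in\mathfrak{F}$, every $f\in\mathscr{F}$ on $\ell_\infty^+(F)$ and every sequence $(v_n)\subseteq V$ with $r_f(v_n,F)\to\mathrm{rad}_V^f(F)$, $(v_n)$ has a $\tau$-convergent subsequence; "weak-" refers to $\tau$ weak, no prefix to $\tau$ norm.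 *)

theory Defs
  imports "HOL-Analysis.Analysis"
begin

definition weakly_convergent_to :: "(nat \<Rightarrow> 'a::real_normed_vector) \<Rightarrow> 'a \<Rightarrow> bool" where
  "weakly_convergent_to s x \<longleftrightarrow>
     (\<forall>\<phi>::'a \<Rightarrow> real. bounded_linear \<phi> \<longrightarrow> (\<lambda>n. \<phi> (s n)) \<longlonglongrightarrow> \<phi> x)"

definition kadec_klee :: "'a::real_normed_vector itself \<Rightarrow> bool" where
  "kadec_klee _ \<longleftrightarrow>
     (\<forall>(x::'a) s. norm x = 1 \<and> (\<forall>n. norm (s n) = 1) \<and> weakly_convergent_to s x
        \<longrightarrow> s \<longlonglongrightarrow> x)"

text \<open>The cone \<open>\<ell>\<^sub>\<infinity>\<^sup>+(F)\<close>, represented as the functions \<open>F \<rightarrow> [0,\<infinity>)\<close>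
  extended by 0 outside F.\<close>
definition linf_plus :: "'a set \<Rightarrow> ('a \<Rightarrow> real) set" where
  "linf_plus F = {\<phi>. (\<forall>t\<in>F. 0 \<le> \<phi> t) \<and> (\<forall>t. t \<notin> F \<longrightarrow> \<phi> t = 0)}"

definition F_cwm :: "'a set \<Rightarrow> (('a \<Rightarrow> real) \<Rightarrow> real) set" where
  "F_cwm F = {f.
     (\<forall>\<phi>\<in>linf_plus F. 0 \<le> f \<phi>) \<and>
     (\<forall>\<phi>1\<in>linf_plus F. \<forall>\<phi>2\<in>linf_plus F. \<forall>u::real. 0 \<le> u \<and> u \<le> 1 \<longrightarrow>
        f (\<lambda>t. u * \<phi>1 t + (1 - u) * \<phi>2 t) \<le> u * f \<phi>1 + (1 - u) * f \<phi>2) \<and>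
     (\<forall>\<phi>1\<in>linf_plus F. \<forall>\<phi>2\<in>linf_plus F. (\<forall>t\<in>F. \<phi>1 t \<le> \<phi>2 t) \<longrightarrow> f \<phi>1 \<le> f \<phi>2) \<and>
     (\<forall>\<phi>1\<in>linf_plus F. \<forall>\<phi>2\<in>linf_plus F. (\<forall>t\<in>F. \<phi>1 t < \<phi>2 t) \<longrightarrow> f \<phi>1 < f \<phi>2)}"

definition r_f :: "(('a \<Rightarrow> real) \<Rightarrow> real) \<Rightarrow> 'a::real_normed_vector \<Rightarrow> 'a set \<Rightarrow> real" where
  "r_f f x F = f (\<lambda>t. if t \<in> F then norm (x - t) else 0)"

definition rad_f :: "(('a \<Rightarrow> real) \<Rightarrow> real) \<Rightarrow> 'a::real_normed_vector set \<Rightarrow> 'a set \<Rightarrow> real" where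
  "rad_f f V F = (INF v\<in>V. r_f f v F)"

text \<open>\<open>\<tau>\<close>-\<open>\<F>\<^sub>c\<^sub>w\<^sub>m\<close>-SACP for the triple \<open>(X, V, \<F>(X))\<close>, where \<open>\<F>(X)\<close> is the family of
  nonempty finite subsets; \<open>conv\<close> is the notion of convergence of \<open>\<tau>\<close>.\<close>
definition SACP_cwm ::
  "((nat \<Rightarrow> 'a) \<Rightarrow> 'a \<Rightarrow> bool) \<Rightarrow> 'a::real_normed_vector set \<Rightarrow> bool" where
  "SACP_cwm conv V \<longleftrightarrow>
     (\<forall>F. finite F \<and> F \<noteq> {} \<longrightarrow>
       (\<forall>f\<in>F_cwm F. \<forall>v::nat \<Rightarrow> 'a. (\<forall>n. v n \<in> V) \<and>
          (\<lambda>n. r_f f (v n) F) \<longlonglongrightarrow> rad_f f V F \<longrightarrow>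
          (\<exists>g x. strict_mono g \<and> conv (v \<circ> g) x)))"

definition norm_SACP_cwm :: "'a::real_normed_vector set \<Rightarrow> bool" where
  "norm_SACP_cwm V \<longleftrightarrow> SACP_cwm (\<lambda>s x. s \<longlonglongrightarrow> x) V"

definition weak_SACP_cwm :: "'a::real_normed_vector set \<Rightarrow> bool" where
  "weak_SACP_cwm V \<longleftrightarrow> SACP_cwm weakly_convergent_to V"

end

theory Submission
  imports Defs
begin

text \<open>
  (a) \<Longrightarrow> (b): a minimizing sequence has a subsequence converging weakly to some \<open>y\<close>, and
  \<open>y \<in> V\<close> since closed convex sets are weakly sequentially closed.  As \<open>f\<close> is weakly strictly
  monotone, the distances to some point \<open>i \<in> F\<close> cannot stay uniformly above \<open>\<parallel>y - i\<parallel>\<close>; by weak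
  lower semicontinuity of the norm they converge to \<open>\<parallel>y - i\<parallel>\<close> along a further subsequence, and
  the Kadec--Klee property turns the weak convergence into norm convergence.

  (b) \<Longrightarrow> (a): if \<open>s\<^sub>n\<close> on the unit sphere converges weakly but not in norm to \<open>x\<close>, take a norming
  functional \<open>\<psi>\<close> of \<open>x\<close> and rescale a subsequence staying away from \<open>x\<close> onto the hyperplane
  \<open>\<psi> = 1\<close>, giving \<open>t\<^sub>n\<close>.  The set \<open>V\<close> of all \<open>x + \<Sum>\<lambda>\<^sub>n (t\<^sub>n - x)\<close> with \<open>\<lambda>\<^sub>n \<ge> 0\<close>, \<open>\<Sum>\<lambda>\<^sub>n \<le> 1\<close> is
  convex and, by compactness of the weights in the product topology, weakly sequentially compact,
  hence closed and weakly SACP.  On \<open>V\<close> the norm is at least \<open>\<psi> = 1\<close>, so \<open>(t\<^sub>n)\<close> minimizes the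
  distance to \<open>0\<close>, yet it has no norm convergent subsequence.
\<close>

section \<open>Hahn--Banach theorem and separation\<close>

definition sublinear :: "('a::real_vector \<Rightarrow> real) \<Rightarrow> bool" where
  "sublinear p \<longleftrightarrow> (\<forall>x y. p (x + y) \<le> p x + p y) \<and> (\<forall>c x. 0 < c \<longrightarrow> p (c *\<^sub>R x) = c * p x)"

text \<open>Linear functionals on subspaces, dominated by \<open>p\<close>, are represented by their graphs, so that
  a chain of extensions has its union as upper bound.\<close>

definition dominated_linear_graph :: "('a::real_vector \<Rightarrow> real) \<Rightarrow> ('a \<times> real) set \<Rightarrow> bool" where
  "dominated_linear_graph p G \<longleftrightarrow> (0, 0) \<in> G \<and>
     (\<forall>x a b. (x, a) \<in> G \<longrightarrow> (x, b) \<in> G \<longrightarrow> a = b) \<and>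
     (\<forall>x a y b. (x, a) \<in> G \<longrightarrow> (y, b) \<in> G \<longrightarrow> (x + y, a + b) \<in> G) \<and>
     (\<forall>x a c. (x, a) \<in> G \<longrightarrow> (c *\<^sub>R x, c * a) \<in> G) \<and>
     (\<forall>x a. (x, a) \<in> G \<longrightarrow> a \<le> p x)"

lemma dominated_linear_graphD:
  assumes "dominated_linear_graph p G"
  shows "(0, 0) \<in> G"
    and "(x, a) \<in> G \<Longrightarrow> (x, b) \<in> G \<Longrightarrow> a = b"
    and "(x, a) \<in> G \<Longrightarrow> (y, b) \<in> G \<Longrightarrow> (x + y, a + b) \<in> G"
    and "(x, a) \<in> G \<Longrightarrow> (c *\<^sub>R x, c * a) \<in> G"
    and "(x, a) \<in> G \<Longrightarrow> a \<le> p x"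
  using assms unfolding dominated_linear_graph_def by blast+

lemma sublinear_zero:
  assumes "sublinear p"
  shows "p 0 = 0"
proof -
  have "p ((2::real) *\<^sub>R 0) = 2 * p 0"
    using assms unfolding sublinear_def by (metis zero_less_numeral)
  then show ?thesis by simp
qed

lemma dominated_linear_graph_Union_chain:
  assumes "C \<in> chains {G. dominated_linear_graph p G}" "C \<noteq> {}"
  shows "dominated_linear_graph p (\<Union>C)"
proof -
  have graph: "\<And>G. G \<in> C \<Longrightarrow> dominated_linear_graph p G"
    and chain: "\<And>A B. A \<in> C \<Longrightarrow> B \<in> C \<Longrightarrow> A \<subseteq> B \<or> B \<subseteq> A"
    using assms(1) unfolding chains_def chain_subset_def by auto
  have common: "\<exists>G\<in>C. u \<in> G \<and> v \<in> G" if u: "u \<in> \<Union>C" and v: "v \<in> \<Union>C" for u v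
  proof -
    obtain A B where "A \<in> C" "u \<in> A" "B \<in> C" "v \<in> B" using u v by blast
    then show ?thesis using chain[of A B] by blast
  qed
  show ?thesis
    unfolding dominated_linear_graph_def
  proof (intro conjI allI impI)
    obtain G where "G \<in> C" using assms(2) by blast
    then show "(0, 0) \<in> \<Union>C" using dominated_linear_graphD(1)[OF graph] by blast
  next
    fix x a b assume "(x, a) \<in> \<Union>C" "(x, b) \<in> \<Union>C"
    then obtain G where "G \<in> C" "(x, a) \<in> G" "(x, b) \<in> G" using common by blast
    then show "a = b" using dominated_linear_graphD(2)[OF graph] by blast
  next
    fix x a y b assume "(x, a) \<in> \<Union>C" "(y, b) \<in> \<Union>C"
    then obtain G where "G \<in> C" "(x, a) \<in> G" "(y, b) \<in> G" using common by blast
    then show "(x + y, a + b) \<in> \<Union>C" using dominated_linear_graphD(3)[OF graph] by blast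
  next
    fix x a c assume "(x, a) \<in> \<Union>C"
    then obtain G where "G \<in> C" "(x, a) \<in> G" by blast
    then show "(c *\<^sub>R x, c * a) \<in> \<Union>C" using dominated_linear_graphD(4)[OF graph] by blast
  next
    fix x a assume "(x, a) \<in> \<Union>C"
    then obtain G where "G \<in> C" "(x, a) \<in> G" by blast
    then show "a \<le> p x" using dominated_linear_graphD(5)[OF graph] by blast
  qed
qed

definition graph_extension :: "('a::real_vector \<times> real) set \<Rightarrow> 'a \<Rightarrow> real \<Rightarrow> ('a \<times> real) set" where
  "graph_extension M x0 c = {(y + t *\<^sub>R x0, a + t * c) | y a t. (y, a) \<in> M}"

lemma graph_extension_functional:
  assumes M: "dominated_linear_graph p M" and x0: "\<nexists>a. (x0, a) \<in> M"
    and "(x, a) \<in> graph_extension M x0 c" "(x, b) \<in> graph_extension M x0 c"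
  shows "a = b"
proof -
  obtain y1 a1 t1 y2 a2 t2 where h: "(y1, a1) \<in> M" "(y2, a2) \<in> M"
    "x = y1 + t1 *\<^sub>R x0" "a = a1 + t1 * c" "x = y2 + t2 *\<^sub>R x0" "b = a2 + t2 * c"
    using assms(3,4) unfolding graph_extension_def by blast
  have "t1 = t2"
  proof (rule ccontr)
    assume "t1 \<noteq> t2"
    have diff: "(y1 - y2, a1 - a2) \<in> M"
      using dominated_linear_graphD(3)[OF M h(1) dominated_linear_graphD(4)[OF M h(2), of "-1"]] by simp
    have "y1 - y2 = (t2 - t1) *\<^sub>R x0"
      using h(3,5) by (simp add: algebra_simps)
    then have "(1 / (t2 - t1)) *\<^sub>R (y1 - y2) = x0"
      using \<open>t1 \<noteq> t2\<close> by simp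
    then show False
      using dominated_linear_graphD(4)[OF M diff, of "1 / (t2 - t1)"] x0 by metis
  qed
  then show ?thesis
    using h dominated_linear_graphD(2)[OF M] by auto
qed

lemma graph_extension_dominated:
  assumes p: "sublinear p" and M: "dominated_linear_graph p M" and ya: "(y, a) \<in> M"
    and c_up: "\<And>y a. (y, a) \<in> M \<Longrightarrow> a - p (y - x0) \<le> c"
    and c_low: "\<And>y a. (y, a) \<in> M \<Longrightarrow> c \<le> p (y + x0) - a"
  shows "a + t * c \<le> p (y + t *\<^sub>R x0)"
proof -
  have scaled: "(s *\<^sub>R y, s * a) \<in> M" for s
    using dominated_linear_graphD(4)[OF M ya] .
  have p_scale: "p (s *\<^sub>R z) = s * p z" if "0 < s" for s z
    using p that unfolding sublinear_def by blast
  consider "t = 0" | "t > 0" | "t < 0" by linarith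
  then show ?thesis
  proof cases
    case 1
    then show ?thesis using dominated_linear_graphD(5)[OF M ya] by simp
  next
    case 2
    have "c \<le> p ((1/t) *\<^sub>R y + x0) - (1/t) * a"
      using c_low[OF scaled[of "1/t"]] .
    then have "t * c \<le> t * (p ((1/t) *\<^sub>R y + x0) - (1/t) * a)"
      using 2 by (intro mult_left_mono) auto
    also have "\<dots> = p (t *\<^sub>R ((1/t) *\<^sub>R y + x0)) - a"
      using 2 by (simp add: p_scale right_diff_distrib)
    finally show ?thesis using 2 by (simp add: scaleR_add_right)
  next
    case 3
    define s where "s = - t"
    have s: "0 < s" "t = - s" using 3 by (auto simp: s_def)
    have "(1/s) * a - p ((1/s) *\<^sub>R y - x0) \<le> c"
      using c_up[OF scaled[of "1/s"]] .
    then have "s * ((1/s) * a - p ((1/s) *\<^sub>R y - x0)) \<le> s * c"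
      using s by (intro mult_left_mono) auto
    moreover have "p (y + t *\<^sub>R x0) = s * p ((1/s) *\<^sub>R y - x0)"
      using s p_scale[of s "(1/s) *\<^sub>R y - x0"] by (simp add: scaleR_diff_right)
    ultimately show ?thesis
      using s by (simp add: right_diff_distrib)
  qed
qed

lemma dominated_linear_graph_extension:
  assumes p: "sublinear p" and M: "dominated_linear_graph p M" and x0: "\<nexists>a. (x0, a) \<in> M"
    and c_up: "\<And>y a. (y, a) \<in> M \<Longrightarrow> a - p (y - x0) \<le> c"
    and c_low: "\<And>y a. (y, a) \<in> M \<Longrightarrow> c \<le> p (y + x0) - a"
  shows "dominated_linear_graph p (graph_extension M x0 c)"
  unfolding dominated_linear_graph_def
proof (intro conjI allI impI)
  show "(0, 0) \<in> graph_extension M x0 c"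
    using dominated_linear_graphD(1)[OF M] unfolding graph_extension_def by force
next
  fix x a b assume "(x, a) \<in> graph_extension M x0 c" "(x, b) \<in> graph_extension M x0 c"
  then show "a = b" by (rule graph_extension_functional[OF M x0])
next
  fix x a y b assume "(x, a) \<in> graph_extension M x0 c" "(y, b) \<in> graph_extension M x0 c"
  then obtain y1 a1 t1 y2 a2 t2 where h: "(y1, a1) \<in> M" "(y2, a2) \<in> M"
    "x = y1 + t1 *\<^sub>R x0" "a = a1 + t1 * c" "y = y2 + t2 *\<^sub>R x0" "b = a2 + t2 * c"
    unfolding graph_extension_def by blast
  have "x + y = (y1 + y2) + (t1 + t2) *\<^sub>R x0" "a + b = (a1 + a2) + (t1 + t2) * c"
    using h by (auto simp: algebra_simps)
  with dominated_linear_graphD(3)[OF M h(1,2)] show "(x + y, a + b) \<in> graph_extension M x0 c"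
    unfolding graph_extension_def by blast
next
  fix x a s assume "(x, a) \<in> graph_extension M x0 c"
  then obtain y1 a1 t1 where h: "(y1, a1) \<in> M" "x = y1 + t1 *\<^sub>R x0" "a = a1 + t1 * c"
    unfolding graph_extension_def by blast
  have "s *\<^sub>R x = s *\<^sub>R y1 + (s * t1) *\<^sub>R x0" "s * a = s * a1 + (s * t1) * c"
    using h by (auto simp: algebra_simps)
  with dominated_linear_graphD(4)[OF M h(1)] show "(s *\<^sub>R x, s * a) \<in> graph_extension M x0 c"
    unfolding graph_extension_def by blast
next
  fix x a assume "(x, a) \<in> graph_extension M x0 c"
  then show "a \<le> p x"
    unfolding graph_extension_def using graph_extension_dominated[OF p M _ c_up c_low] by blast
qed

lemma dominated_linear_graph_extend:
  assumes p: "sublinear p" and M: "dominated_linear_graph p M" and x0: "\<nexists>a. (x0, a) \<in> M"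
  shows "\<exists>G. dominated_linear_graph p G \<and> M \<subset> G"
proof -
  note M0 = dominated_linear_graphD(1)[OF M]
  have gap: "a1 - p (y1 - x0) \<le> p (y2 + x0) - a2" if "(y1, a1) \<in> M" "(y2, a2) \<in> M" for y1 a1 y2 a2
  proof -
    have "a1 + a2 \<le> p ((y1 - x0) + (y2 + x0))"
      using dominated_linear_graphD(5)[OF M dominated_linear_graphD(3)[OF M that]] by simp
    also have "\<dots> \<le> p (y1 - x0) + p (y2 + x0)"
      using p unfolding sublinear_def by blast
    finally show ?thesis by simp
  qed
  define c where "c = Sup {a - p (y - x0) | y a. (y, a) \<in> M}"
  have c_up: "a - p (y - x0) \<le> c" if "(y, a) \<in> M" for y a
    unfolding c_def using that gap[OF _ M0] by (intro cSup_upper) (auto simp: bdd_above_def)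
  have c_low: "c \<le> p (y + x0) - a" if "(y, a) \<in> M" for y a
    unfolding c_def using M0 gap[OF _ that] by (intro cSup_least) auto
  have "M \<subseteq> graph_extension M x0 c"
    unfolding graph_extension_def by force
  moreover have "(x0, c) \<in> graph_extension M x0 c"
    unfolding graph_extension_def using M0 by force
  ultimately show ?thesis
    using dominated_linear_graph_extension[OF p M x0 c_up c_low] x0 by blast
qed

theorem Hahn_Banach_sublinear:
  assumes p: "sublinear p"
  shows "\<exists>\<psi>. linear \<psi> \<and> (\<forall>x. \<psi> x \<le> p x)"
proof -
  have "dominated_linear_graph p {(0, 0)}"
    unfolding dominated_linear_graph_def using sublinear_zero[OF p] by auto
  then have "\<exists>U\<in>{G. dominated_linear_graph p G}. \<forall>X\<in>C. X \<subseteq> U"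
    if "C \<in> chains {G. dominated_linear_graph p G}" for C
  proof (cases "C = {}")
    case False
    then show ?thesis using dominated_linear_graph_Union_chain[OF that False] by blast
  qed blast
  then obtain M where M: "dominated_linear_graph p M"
    and maximal: "\<And>G. dominated_linear_graph p G \<Longrightarrow> M \<subseteq> G \<Longrightarrow> G = M"
    using Zorn_Lemma2[of "{G. dominated_linear_graph p G}"] by auto
  have total: "\<exists>a. (x, a) \<in> M" for x
    using dominated_linear_graph_extend[OF p M, of x] maximal by blast
  define \<psi> where "\<psi> x = (THE a. (x, a) \<in> M)" for x
  have graph: "(x, \<psi> x) \<in> M" for x
    unfolding \<psi>_def using total[of x] dominated_linear_graphD(2)[OF M] by (auto intro: theI)
  have \<psi>_eq: "(x, a) \<in> M \<Longrightarrow> \<psi> x = a" for x a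
    using graph dominated_linear_graphD(2)[OF M] by blast
  have "linear \<psi>"
  proof (rule linearI)
    show "\<psi> (x + y) = \<psi> x + \<psi> y" for x y
      using \<psi>_eq[OF dominated_linear_graphD(3)[OF M graph graph]] .
    show "\<psi> (c *\<^sub>R x) = c *\<^sub>R \<psi> x" for c x
      using \<psi>_eq[OF dominated_linear_graphD(4)[OF M graph]] by simp
  qed
  moreover have "\<psi> x \<le> p x" for x
    using dominated_linear_graphD(5)[OF M graph] .
  ultimately show ?thesis by blast
qed

text \<open>The gauge below is sublinear, bounded by the norm and at most \<open>-r\<close> at \<open>-w\<close> for \<open>w \<in> C\<close>, so a
  linear functional below it separates \<open>C\<close> from the origin.\<close>

definition separation_gauge :: "'a::real_normed_vector set \<Rightarrow> real \<Rightarrow> 'a \<Rightarrow> real" where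
  "separation_gauge C r z = Inf {norm (z + t *\<^sub>R w) - t * r | t w. 0 \<le> t \<and> w \<in> C}"

context
  fixes C :: "'a::real_normed_vector set" and r :: real
  assumes convex: "convex C" and nonempty: "C \<noteq> {}" and far: "\<And>w. w \<in> C \<Longrightarrow> r \<le> norm w"
begin

lemma separation_gauge_le:
  assumes "0 \<le> t" "w \<in> C"
  shows "separation_gauge C r z \<le> norm (z + t *\<^sub>R w) - t * r"
  unfolding separation_gauge_def
proof (rule cInf_lower)
  have "- norm z \<le> norm (z + t *\<^sub>R w) - t * r" if "0 \<le> t" "w \<in> C" for t w
  proof -
    have "t * r \<le> norm (t *\<^sub>R w)"
      using mult_left_mono[OF far[OF that(2)] that(1)] that(1) by simp
    also have "\<dots> \<le> norm (z + t *\<^sub>R w) + norm z"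
      using norm_triangle_ineq4[of "z + t *\<^sub>R w" z] by simp
    finally show ?thesis by simp
  qed
  then show "bdd_below {norm (z + t *\<^sub>R w) - t * r | t w. 0 \<le> t \<and> w \<in> C}"
    by (auto simp: bdd_below_def)
qed (use assms in blast)

lemma separation_gauge_greatest:
  assumes "\<And>t w. 0 \<le> t \<Longrightarrow> w \<in> C \<Longrightarrow> b \<le> norm (z + t *\<^sub>R w) - t * r"
  shows "b \<le> separation_gauge C r z"
  unfolding separation_gauge_def
proof (rule cInf_greatest)
  obtain w0 where "w0 \<in> C" using nonempty by blast
  then show "{norm (z + t *\<^sub>R w) - t * r | t w. 0 \<le> t \<and> w \<in> C} \<noteq> {}" by fastforce
qed (use assms in blast)

lemma separation_gauge_le_norm: "separation_gauge C r z \<le> norm z"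
  using separation_gauge_le[of 0] nonempty by auto

lemma separation_gauge_neg: "w \<in> C \<Longrightarrow> separation_gauge C r (- w) \<le> - r"
  using separation_gauge_le[of 1 w "- w"] by simp

text \<open>Two admissible pairs \<open>(t1, w1)\<close>, \<open>(t2, w2)\<close> merge into \<open>(t1 + t2, w)\<close>, with \<open>w\<close> the
  convex combination of \<open>w1\<close> and \<open>w2\<close> with weights proportional to \<open>t1\<close> and \<open>t2\<close>.\<close>

lemma separation_gauge_add_le:
  assumes "0 \<le> t1" "w1 \<in> C" "0 \<le> t2" "w2 \<in> C"
  shows "separation_gauge C r (z1 + z2)
    \<le> (norm (z1 + t1 *\<^sub>R w1) - t1 * r) + (norm (z2 + t2 *\<^sub>R w2) - t2 * r)"
proof -
  define t where "t = t1 + t2"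
  define w where "w = (if t = 0 then w1 else (t1 / t) *\<^sub>R w1 + (t2 / t) *\<^sub>R w2)"
  have "w \<in> C"
  proof (cases "t = 0")
    case False
    then have "t1 / t + t2 / t = 1" by (simp add: t_def add_divide_distrib[symmetric])
    with False assms have "(t1 / t) *\<^sub>R w1 + (t2 / t) *\<^sub>R w2 \<in> C"
      unfolding t_def by (intro convexD[OF convex]) auto
    with False show ?thesis by (simp add: w_def)
  qed (simp add: w_def assms)
  moreover have "t *\<^sub>R w = t1 *\<^sub>R w1 + t2 *\<^sub>R w2"
    using assms by (auto simp: w_def t_def scaleR_add_right add_nonneg_eq_0_iff)
  then have "z1 + z2 + t *\<^sub>R w = (z1 + t1 *\<^sub>R w1) + (z2 + t2 *\<^sub>R w2)"
    by (simp add: algebra_simps)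
  then have "norm (z1 + z2 + t *\<^sub>R w) \<le> norm (z1 + t1 *\<^sub>R w1) + norm (z2 + t2 *\<^sub>R w2)"
    by (metis norm_triangle_ineq)
  ultimately show ?thesis
    using separation_gauge_le[of t w "z1 + z2"] assms by (simp add: t_def distrib_right)
qed

lemma separation_gauge_add:
  "separation_gauge C r (z1 + z2) \<le> separation_gauge C r z1 + separation_gauge C r z2"
proof -
  have "separation_gauge C r (z1 + z2) - separation_gauge C r z2 \<le> separation_gauge C r z1"
  proof (rule separation_gauge_greatest)
    fix t1 :: real and w1 assume "0 \<le> t1" "w1 \<in> C"
    have "separation_gauge C r (z1 + z2) - (norm (z1 + t1 *\<^sub>R w1) - t1 * r) \<le> separation_gauge C r z2"
      using separation_gauge_add_le[OF \<open>0 \<le> t1\<close> \<open>w1 \<in> C\<close>]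
      by (intro separation_gauge_greatest) (simp add: algebra_simps)
    then show "separation_gauge C r (z1 + z2) - separation_gauge C r z2 \<le> norm (z1 + t1 *\<^sub>R w1) - t1 * r"
      by simp
  qed
  then show ?thesis by simp
qed

lemma separation_gauge_scale_le:
  assumes "0 < c"
  shows "separation_gauge C r (c *\<^sub>R z) \<le> c * separation_gauge C r z"
proof -
  have "separation_gauge C r (c *\<^sub>R z) / c \<le> separation_gauge C r z"
  proof (rule separation_gauge_greatest)
    fix t :: real and w assume "0 \<le> t" "w \<in> C"
    then have "separation_gauge C r (c *\<^sub>R z) \<le> norm (c *\<^sub>R z + (c * t) *\<^sub>R w) - (c * t) * r"
      using assms by (intro separation_gauge_le) auto
    also have "c *\<^sub>R z + (c * t) *\<^sub>R w = c *\<^sub>R (z + t *\<^sub>R w)"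
      by (simp add: scaleR_add_right)
    also have "norm (c *\<^sub>R (z + t *\<^sub>R w)) - (c * t) * r = c * (norm (z + t *\<^sub>R w) - t * r)"
      using assms by (simp add: right_diff_distrib)
    finally show "separation_gauge C r (c *\<^sub>R z) / c \<le> norm (z + t *\<^sub>R w) - t * r"
      using assms by (simp add: divide_le_eq mult.commute)
  qed
  then show ?thesis using assms by (simp add: divide_le_eq mult.commute)
qed

lemma sublinear_separation_gauge: "sublinear (separation_gauge C r)"
proof -
  have "separation_gauge C r (c *\<^sub>R z) = c * separation_gauge C r z" if "0 < c" for c z
  proof -
    have "separation_gauge C r z \<le> (1/c) * separation_gauge C r (c *\<^sub>R z)"
      using separation_gauge_scale_le[of "1/c" "c *\<^sub>R z"] that by simp
    then show ?thesis
      using separation_gauge_scale_le[OF that, of z] that by (simp add: field_simps)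
  qed
  then show ?thesis
    unfolding sublinear_def using separation_gauge_add by blast
qed

end

lemma convex_separation_from_origin:
  fixes C :: "'a::real_normed_vector set"
  assumes "convex C" "C \<noteq> {}" "\<And>w. w \<in> C \<Longrightarrow> r \<le> norm w"
  shows "\<exists>\<psi>. bounded_linear \<psi> \<and> (\<forall>z. \<bar>\<psi> z\<bar> \<le> norm z) \<and> (\<forall>w\<in>C. r \<le> \<psi> w)"
proof -
  obtain \<psi> where lin: "linear \<psi>" and below: "\<And>z. \<psi> z \<le> separation_gauge C r z"
    using Hahn_Banach_sublinear[OF sublinear_separation_gauge[OF assms]] by blast
  have le_norm: "\<psi> z \<le> norm z" for z
    using below[of z] separation_gauge_le_norm[OF assms] by (rule order_trans)
  have abs_le: "\<bar>\<psi> z\<bar> \<le> norm z" for z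
    using le_norm[of z] le_norm[of "- z"] linear_neg[OF lin, of z] by simp
  have "bounded_linear \<psi>"
    using lin abs_le by (intro bounded_linear_intro[where K=1]) (auto simp: linear_add linear_scale)
  moreover have "r \<le> \<psi> w" if "w \<in> C" for w
    using below[of "- w"] separation_gauge_neg[OF assms that] linear_neg[OF lin, of w] by simp
  ultimately show ?thesis using abs_le by blast
qed

lemma norming_functional:
  fixes z :: "'a::real_normed_vector"
  obtains \<psi> where "bounded_linear \<psi>" "\<And>w. \<bar>\<psi> w\<bar> \<le> norm w" "\<psi> z = norm z"
proof -
  obtain \<psi> where "bounded_linear \<psi>" "\<forall>w. \<bar>\<psi> w\<bar> \<le> norm w" "norm z \<le> \<psi> z"
    using convex_separation_from_origin[of "{z}" "norm z"] by auto
  moreover have "\<psi> z \<le> norm z" using calculation(2) by (metis abs_le_D1)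
  ultimately show ?thesis using that by auto
qed

section \<open>Weak convergence\<close>

lemma weakly_convergent_toD:
  fixes \<phi> :: "'a::real_normed_vector \<Rightarrow> real"
  shows "weakly_convergent_to s x \<Longrightarrow> bounded_linear \<phi> \<Longrightarrow> (\<lambda>n. \<phi> (s n)) \<longlonglongrightarrow> \<phi> x"
  unfolding weakly_convergent_to_def by simp

lemma weakly_convergent_to_subseq:
  "weakly_convergent_to s x \<Longrightarrow> strict_mono r \<Longrightarrow> weakly_convergent_to (s \<circ> r) x"
  unfolding weakly_convergent_to_def
  by (auto intro: LIMSEQ_subseq_LIMSEQ[unfolded comp_def] simp: comp_def)

lemma weakly_convergent_to_diff_const:
  "weakly_convergent_to s x \<Longrightarrow> weakly_convergent_to (\<lambda>n. s n - c) (x - c)"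
  unfolding weakly_convergent_to_def by (auto simp: linear_simps intro!: tendsto_diff)

lemma tendsto_imp_weakly_convergent_to: "s \<longlonglongrightarrow> x \<Longrightarrow> weakly_convergent_to s x"
  unfolding weakly_convergent_to_def by (auto intro: bounded_linear.tendsto)

lemma weakly_convergent_to_scaleR:
  "a \<longlonglongrightarrow> \<alpha> \<Longrightarrow> weakly_convergent_to s x \<Longrightarrow> weakly_convergent_to (\<lambda>n. a n *\<^sub>R s n) (\<alpha> *\<^sub>R x)"
  unfolding weakly_convergent_to_def by (auto simp: linear_simps intro!: tendsto_mult)

lemma weakly_convergent_to_unique:
  fixes a b :: "'a::real_normed_vector"
  assumes "weakly_convergent_to s a" "weakly_convergent_to s b"
  shows "a = b"
proof -
  obtain \<psi> :: "'a \<Rightarrow> real" where bl: "bounded_linear \<psi>" and norming: "\<psi> (a - b) = norm (a - b)"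
    by (rule norming_functional)
  have "\<psi> a = \<psi> b"
    using weakly_convergent_toD[OF assms(1) bl] weakly_convergent_toD[OF assms(2) bl] by (rule LIMSEQ_unique)
  then show ?thesis using norming bl by (simp add: linear_simps)
qed

lemma tendsto_subseq_eq_weak_limit:
  "weakly_convergent_to t x \<Longrightarrow> strict_mono g \<Longrightarrow> (t \<circ> g) \<longlonglongrightarrow> z \<Longrightarrow> z = x"
  using weakly_convergent_to_unique tendsto_imp_weakly_convergent_to weakly_convergent_to_subseq by blast

lemma weakly_convergent_to_norm_lower:
  fixes y :: "'a::real_normed_vector"
  assumes "weakly_convergent_to s y" "0 < \<delta>"
  shows "eventually (\<lambda>n. norm y - \<delta> < norm (s n)) sequentially"
proof -
  obtain \<psi> :: "'a \<Rightarrow> real" where bl: "bounded_linear \<psi>" and le: "\<And>w. \<bar>\<psi> w\<bar> \<le> norm w"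
    and norming: "\<psi> y = norm y"
    using norming_functional[of y] by blast
  have "(\<lambda>n. \<psi> (s n)) \<longlonglongrightarrow> norm y"
    using weakly_convergent_toD[OF assms(1) bl] norming by simp
  then have "eventually (\<lambda>n. norm y - \<delta> < \<psi> (s n)) sequentially"
    using assms(2) by (intro order_tendstoD(1)) auto
  then show ?thesis
    by eventually_elim (use le in \<open>meson abs_le_D1 less_le_trans\<close>)
qed

lemma weakly_convergent_to_closed_convex:
  assumes "closed V" "convex V" "\<And>n. s n \<in> V" "weakly_convergent_to s y"
  shows "y \<in> V"
proof (rule ccontr)
  assume "y \<notin> V"
  then obtain r where "0 < r" and ball: "ball y r \<subseteq> - V"
    using assms(1) open_contains_ball[of "- V"] by auto
  have "r \<le> norm w" if w: "w \<in> (\<lambda>v. v - y) ` V" for w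
  proof -
    obtain v where "v \<in> V" "w = v - y" using w by blast
    with ball have "v \<notin> ball y r" "w = v - y" by auto
    then show ?thesis by (simp add: dist_norm norm_minus_commute)
  qed
  moreover have "convex ((\<lambda>v. v - y) ` V)"
    using assms(2) by (simp add: convex_translation_subtract)
  moreover have "(\<lambda>v. v - y) ` V \<noteq> {}"
    using assms(3) by blast
  ultimately obtain \<psi> where bl: "bounded_linear \<psi>" and sep: "\<forall>w\<in>(\<lambda>v. v - y) ` V. r \<le> \<psi> w"
    using convex_separation_from_origin by blast
  have "r \<le> \<psi> (s n) - \<psi> y" for n
    using sep assms(3)[of n] bl by (auto simp: linear_simps)
  moreover have "(\<lambda>n. \<psi> (s n) - \<psi> y) \<longlonglongrightarrow> 0"
    using weakly_convergent_toD[OF assms(4) bl] by (rule LIM_zero)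
  ultimately have "r \<le> 0" by (intro LIMSEQ_le_const) auto
  with \<open>0 < r\<close> show False by simp
qed

definition weakly_seq_compact :: "'a::real_normed_vector set \<Rightarrow> bool" where
  "weakly_seq_compact S \<longleftrightarrow>
     (\<forall>s::nat \<Rightarrow> 'a. (\<forall>n. s n \<in> S) \<longrightarrow>
        (\<exists>r::nat \<Rightarrow> nat. \<exists>y\<in>S. strict_mono r \<and> weakly_convergent_to (s \<circ> r) y))"

lemma weakly_seq_compact_imp_closed:
  assumes "weakly_seq_compact S"
  shows "closed S"
  unfolding closed_sequential_limits
proof (intro allI impI)
  fix s y assume "(\<forall>n. s n \<in> S) \<and> s \<longlonglongrightarrow> y"
  then obtain r z where "strict_mono r" "z \<in> S" "weakly_convergent_to (s \<circ> r) z" and "s \<longlonglongrightarrow> y"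
    using assms unfolding weakly_seq_compact_def by blast
  moreover have "weakly_convergent_to (s \<circ> r) y"
    using tendsto_imp_weakly_convergent_to LIMSEQ_subseq_LIMSEQ calculation by blast
  ultimately show "y \<in> S"
    using weakly_convergent_to_unique by blast
qed

section \<open>The Kadec--Klee property implies the norm SACP\<close>

lemma kadec_klee_tendsto:
  fixes u :: "nat \<Rightarrow> 'a::real_normed_vector"
  assumes kk: "kadec_klee TYPE('a)" and weak: "weakly_convergent_to u z"
    and norms: "(\<lambda>k. norm (u k)) \<longlonglongrightarrow> norm z"
  shows "u \<longlonglongrightarrow> z"
proof (cases "z = 0")
  case True
  then show ?thesis using norms by (simp add: tendsto_norm_zero_iff)
next
  case False
  \<comment> \<open>the case \<open>u k = 0\<close> only keeps \<open>q k\<close> on the unit sphere; eventually \<open>u k \<noteq> 0\<close>\<close>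
  define q where "q k = (if u k = 0 then sgn z else sgn (u k))" for k
  have u_nonzero: "eventually (\<lambda>k. u k \<noteq> 0) sequentially"
    using order_tendstoD(1)[OF norms, of 0] False by simp
  have "weakly_convergent_to q (sgn z)"
    unfolding weakly_convergent_to_def
  proof (intro allI impI)
    fix \<phi> :: "'a \<Rightarrow> real" assume bl: "bounded_linear \<phi>"
    have "(\<lambda>k. \<phi> (u k) / norm (u k)) \<longlonglongrightarrow> \<phi> z / norm z"
      using weakly_convergent_toD[OF weak bl] norms False by (intro tendsto_divide) auto
    moreover have "eventually (\<lambda>k. \<phi> (u k) / norm (u k) = \<phi> (q k)) sequentially"
      using u_nonzero
      by eventually_elim (use bl in \<open>simp add: q_def sgn_div_norm linear_simps divide_inverse mult.commute\<close>)
    ultimately have "(\<lambda>k. \<phi> (q k)) \<longlonglongrightarrow> \<phi> z / norm z"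
      by (rule Lim_transform_eventually)
    then show "(\<lambda>k. \<phi> (q k)) \<longlonglongrightarrow> \<phi> (sgn z)"
      using bl by (simp add: sgn_div_norm linear_simps divide_inverse mult.commute)
  qed
  moreover have "norm (q k) = 1" for k
    using False by (simp add: q_def norm_sgn)
  ultimately have "q \<longlonglongrightarrow> sgn z"
    using kk False unfolding kadec_klee_def by (simp add: norm_sgn)
  then have "(\<lambda>k. norm (u k) *\<^sub>R q k) \<longlonglongrightarrow> norm z *\<^sub>R sgn z"
    using norms by (rule tendsto_scaleR[rotated])
  moreover have norm_sgn_scale: "norm x *\<^sub>R sgn x = x" for x :: 'a
    by (cases "x = 0") (simp_all add: sgn_div_norm)
  moreover have "norm (u k) *\<^sub>R q k = u k" for k
    using norm_sgn_scale[of "u k"] by (simp add: q_def)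
  ultimately show ?thesis by (simp add: norm_sgn_scale)
qed

lemma subseq_frequently:
  assumes "\<And>k. frequently (P k) sequentially"
  obtains r :: "nat \<Rightarrow> nat" where "strict_mono r" "\<And>k. P k (r k)"
proof -
  obtain f where f: "\<And>k N. N \<le> f k N \<and> P k (f k N)"
    using assms unfolding frequently_sequentially by metis
  define r where "r = rec_nat (f 0 0) (\<lambda>k m. f (Suc k) (Suc m))"
  have "r k < r (Suc k)" for k
    using f[where k = "Suc k" and N = "Suc (r k)"] by (simp add: r_def)
  then have "strict_mono r" by (rule strict_mono_Suc_iff[THEN iffD2, rule_format])
  moreover have "P k (r k)" for k
    using f by (cases k) (simp_all add: r_def)
  ultimately show ?thesis using that by blast
qed

lemma weakly_convergent_to_subseq_norm_tendsto:
  assumes weak: "weakly_convergent_to u z"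
    and close: "\<And>\<delta>. 0 < \<delta> \<Longrightarrow> frequently (\<lambda>n. norm (u n) < norm z + \<delta>) sequentially"
  obtains r where "strict_mono r" "(\<lambda>k. norm (u (r k))) \<longlonglongrightarrow> norm z"
proof -
  obtain r where r: "strict_mono r" and r_close: "\<And>k. norm (u (r k)) < norm z + inverse (Suc k)"
    using subseq_frequently[of "\<lambda>k n. norm (u n) < norm z + inverse (Suc k)"] close by auto
  have "(\<lambda>k. norm (u (r k))) \<longlonglongrightarrow> norm z"
  proof (rule order_tendstoI)
    fix a assume "a < norm z"
    then show "eventually (\<lambda>k. a < norm (u (r k))) sequentially"
      using eventually_subseq[OF r weakly_convergent_to_norm_lower[OF weak, of "norm z - a"]] by simp
  next
    fix a assume "norm z < a"
    then have "eventually (\<lambda>k. inverse (Suc k) < a - norm z) sequentially"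
      by (intro order_tendstoD(2)[OF LIMSEQ_inverse_real_of_nat]) simp
    then show "eventually (\<lambda>k. norm (u (r k)) < a) sequentially"
      by eventually_elim (use r_close in \<open>smt (verit)\<close>)
  qed
  with r that show ?thesis by blast
qed

lemma F_cwmD:
  assumes "f \<in> F_cwm F" "\<phi> \<in> linf_plus F" "\<phi>' \<in> linf_plus F"
  shows "0 \<le> f \<phi>"
    and "(\<forall>t\<in>F. \<phi> t \<le> \<phi>' t) \<Longrightarrow> f \<phi> \<le> f \<phi>'"
    and "(\<forall>t\<in>F. \<phi> t < \<phi>' t) \<Longrightarrow> f \<phi> < f \<phi>'"
  using assms unfolding F_cwm_def by blast+

lemma distance_profile_linf_plus: "(\<lambda>t. if t \<in> F then norm (x - t) else 0) \<in> linf_plus F"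
  unfolding linf_plus_def by auto

lemma rad_f_le_r_f:
  assumes "f \<in> F_cwm F" "y \<in> V"
  shows "rad_f f V F \<le> r_f f y F"
  unfolding rad_f_def r_f_def
proof (rule cINF_lower)
  show "bdd_below ((\<lambda>v. f (\<lambda>t. if t \<in> F then norm (v - t) else 0)) ` V)"
    using F_cwmD(1)[OF assms(1) distance_profile_linf_plus distance_profile_linf_plus]
    by (auto simp: bdd_below_def)
qed (use assms(2) in simp)

text \<open>This is where the weak strict monotonicity of \<open>f\<close> enters.\<close>

lemma r_f_limit_frequently_close:
  assumes f: "f \<in> F_cwm F" and "finite F"
    and lim: "(\<lambda>n. r_f f (w n) F) \<longlonglongrightarrow> R" and "R \<le> r_f f y F"
  shows "\<exists>i\<in>F. \<forall>\<delta>>0. frequently (\<lambda>n. norm (w n - i) < norm (y - i) + \<delta>) sequentially"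
proof (rule ccontr)
  assume "\<not> ?thesis"
  then have "\<forall>i\<in>F. \<exists>\<delta>>0. eventually (\<lambda>n. norm (y - i) + \<delta> \<le> norm (w n - i)) sequentially"
    by (auto simp: not_frequently not_less)
  then obtain D where D_pos: "\<And>i. i \<in> F \<Longrightarrow> 0 < D i"
    and D_far: "\<forall>i\<in>F. eventually (\<lambda>n. norm (y - i) + D i \<le> norm (w n - i)) sequentially"
    by metis
  define \<phi> where "\<phi> t = (if t \<in> F then norm (y - t) + D t / 2 else 0)" for t
  have \<phi>_nonneg: "0 \<le> \<phi> t" for t
  proof (cases "t \<in> F")
    case True
    then show ?thesis using D_pos[OF True] norm_ge_zero[of "y - t"] by (simp add: \<phi>_def)
  qed (simp add: \<phi>_def)
  have \<phi>: "\<phi> \<in> linf_plus F"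
    unfolding linf_plus_def by (intro CollectI conjI ballI allI impI \<phi>_nonneg) (simp add: \<phi>_def)
  have "r_f f y F < f \<phi>"
    unfolding r_f_def using D_pos
    by (intro F_cwmD(3)[OF f distance_profile_linf_plus \<phi>]) (auto simp: \<phi>_def)
  moreover have "eventually (\<lambda>n. f \<phi> \<le> r_f f (w n) F) sequentially"
    using eventually_ball_finite[OF \<open>finite F\<close> D_far]
  proof eventually_elim
    case (elim n)
    then show ?case
      unfolding r_f_def using D_pos
      by (intro F_cwmD(2)[OF f \<phi> distance_profile_linf_plus]) (force simp: \<phi>_def)
  qed
  then have "f \<phi> \<le> R"
    using lim by (intro tendsto_lowerbound) auto
  ultimately show False using \<open>R \<le> r_f f y F\<close> by simp
qed

lemma kadec_klee_imp_norm_SACP_cwm: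
  fixes V :: "'a::real_normed_vector set"
  assumes kk: "kadec_klee TYPE('a)" and "closed V" "convex V" and weak_sacp: "weak_SACP_cwm V"
  shows "norm_SACP_cwm V"
  unfolding norm_SACP_cwm_def SACP_cwm_def
proof (intro allI impI ballI)
  fix F :: "'a set" and f v
  assume F: "finite F \<and> F \<noteq> {}" and f: "f \<in> F_cwm F"
    and minimizing: "(\<forall>n. v n \<in> V) \<and> (\<lambda>n. r_f f (v n) F) \<longlonglongrightarrow> rad_f f V F"
  obtain g y where g: "strict_mono g" and weak: "weakly_convergent_to (v \<circ> g) y"
    using weak_sacp[unfolded weak_SACP_cwm_def SACP_cwm_def, rule_format, OF F f minimizing] by blast
  define w where "w = v \<circ> g"
  have "y \<in> V"
    using weakly_convergent_to_closed_convex[OF \<open>closed V\<close> \<open>convex V\<close> _ weak] minimizing by simp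
  then have "rad_f f V F \<le> r_f f y F"
    by (rule rad_f_le_r_f[OF f])
  moreover have "(\<lambda>n. r_f f (w n) F) \<longlonglongrightarrow> rad_f f V F"
    using LIMSEQ_subseq_LIMSEQ[OF conjunct2[OF minimizing] g] by (simp add: w_def comp_def)
  ultimately obtain i where
    close: "\<And>\<delta>. 0 < \<delta> \<Longrightarrow> frequently (\<lambda>n. norm (w n - i) < norm (y - i) + \<delta>) sequentially"
    using r_f_limit_frequently_close[OF f conjunct1[OF F]] by blast
  have weak_i: "weakly_convergent_to (\<lambda>n. w n - i) (y - i)"
    using weakly_convergent_to_diff_const[OF weak] by (simp add: w_def)
  obtain h where h: "strict_mono h" and norms: "(\<lambda>k. norm (w (h k) - i)) \<longlonglongrightarrow> norm (y - i)"
    using weakly_convergent_to_subseq_norm_tendsto[OF weak_i close] by blast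
  have "(\<lambda>k. w (h k) - i) \<longlonglongrightarrow> y - i"
    using kadec_klee_tendsto[OF kk _ norms] weakly_convergent_to_subseq[OF weak_i h]
    by (simp add: comp_def)
  then have "(\<lambda>k. (w (h k) - i) + i) \<longlonglongrightarrow> (y - i) + i"
    by (intro tendsto_add tendsto_const)
  then have "(v \<circ> (g \<circ> h)) \<longlonglongrightarrow> y"
    by (simp add: w_def comp_def)
  moreover have "strict_mono (g \<circ> h)"
    using g h by (rule strict_mono_o)
  ultimately show "\<exists>g x. strict_mono g \<and> (v \<circ> g) \<longlonglongrightarrow> x" by blast
qed

section \<open>Infinite convex combinations\<close>

definition subprob_weights :: "(nat \<Rightarrow> real) \<Rightarrow> bool" where
  "subprob_weights l \<longleftrightarrow> (\<forall>n. 0 \<le> l n) \<and> (\<forall>M. sum l {..<M} \<le> 1)"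

definition series_combination :: "'a::real_normed_vector \<Rightarrow> (nat \<Rightarrow> 'a) \<Rightarrow> (nat \<Rightarrow> real) \<Rightarrow> 'a" where
  "series_combination x t l = x + (\<Sum>n. l n *\<^sub>R (t n - x))"

definition series_hull :: "'a::real_normed_vector \<Rightarrow> (nat \<Rightarrow> 'a) \<Rightarrow> 'a set" where
  "series_hull x t = series_combination x t ` {l. subprob_weights l}"

lemma summable_subprob_weights: "subprob_weights l \<Longrightarrow> summable l"
  unfolding subprob_weights_def by (intro summableI_nonneg_bounded) auto

lemma subprob_weights_le_1:
  assumes "subprob_weights l"
  shows "l n \<le> 1"
proof -
  have "l n \<le> sum l {..<Suc n}"
    using assms unfolding subprob_weights_def by (intro member_le_sum) auto
  also have "\<dots> \<le> 1"
    using assms unfolding subprob_weights_def by blast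
  finally show ?thesis .
qed

lemma summable_subprob_weights_scaleR:
  fixes b :: "nat \<Rightarrow> 'a::banach"
  assumes l: "subprob_weights l" and b: "\<And>n. norm (b n) \<le> B"
  shows "summable (\<lambda>n. l n *\<^sub>R b n)"
proof (rule summable_comparison_test)
  have "norm (l n *\<^sub>R b n) \<le> B * l n" for n
    using mult_left_mono[OF b[of n], of "l n"] l unfolding subprob_weights_def by (simp add: mult.commute)
  then show "\<exists>N. \<forall>n\<ge>N. norm (l n *\<^sub>R b n) \<le> B * l n" by blast
  show "summable (\<lambda>n. B * l n)"
    using summable_subprob_weights[OF l] by (rule summable_mult)
qed

lemma subprob_weights_tail:
  assumes l: "subprob_weights l" and b: "\<And>n. \<bar>b n\<bar> \<le> B" and small: "\<And>n. N \<le> n \<Longrightarrow> \<bar>b n\<bar> \<le> e"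
  shows "\<bar>(\<Sum>n. l n * b n) - (\<Sum>n<N. l n * b n)\<bar> \<le> e"
proof -
  have l_nonneg: "0 \<le> l n" for n
    using l unfolding subprob_weights_def by blast
  have summable_l: "summable (\<lambda>m. l (m + N))"
    using summable_subprob_weights[OF l] by (rule summable_ignore_initial_segment)
  have summable: "summable (\<lambda>n. l n * b n)"
    using summable_subprob_weights_scaleR[OF l, of b B] b by simp
  have "summable (\<lambda>n. \<bar>l n * b n\<bar>)"
    using summable_subprob_weights_scaleR[OF l, of "\<lambda>n. \<bar>b n\<bar>" B] b l_nonneg by (simp add: abs_mult)
  then have summable_abs: "summable (\<lambda>m. \<bar>l (m + N) * b (m + N)\<bar>)"
    by (rule summable_ignore_initial_segment)
  have "\<bar>(\<Sum>n. l n * b n) - (\<Sum>n<N. l n * b n)\<bar> = \<bar>\<Sum>m. l (m + N) * b (m + N)\<bar>"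
    using suminf_split_initial_segment[OF summable, of N] by simp
  also have "\<dots> \<le> (\<Sum>m. \<bar>l (m + N) * b (m + N)\<bar>)"
    using summable_abs by (rule summable_rabs)
  also have "\<dots> \<le> (\<Sum>m. e * l (m + N))"
  proof (rule suminf_le)
    show "\<bar>l (m + N) * b (m + N)\<bar> \<le> e * l (m + N)" for m
      using mult_left_mono[OF small[of "m + N"] l_nonneg[of "m + N"]] l_nonneg[of "m + N"]
      by (simp add: abs_mult mult.commute)
  qed (use summable_abs summable_mult[OF summable_l] in auto)
  also have "\<dots> = e * (\<Sum>m. l (m + N))"
    using summable_l by (rule suminf_mult)
  also have "\<dots> \<le> e"
  proof -
    have "(\<Sum>m. l (m + N)) \<le> suminf l"
      using suminf_split_initial_segment[OF summable_subprob_weights[OF l], of N] l_nonneg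
      by (simp add: sum_nonneg)
    also have "\<dots> \<le> 1"
      using suminf_le_const[OF summable_subprob_weights[OF l]] l unfolding subprob_weights_def by blast
    finally show ?thesis
      using small[of N] by (intro mult_left_le) auto
  qed
  finally show ?thesis .
qed

lemma tendsto_suminf_subprob_weights:
  assumes L: "\<And>k. subprob_weights (L k)" and \<mu>: "subprob_weights \<mu>"
    and pointwise: "\<And>n. (\<lambda>k. L k n) \<longlonglongrightarrow> \<mu> n" and a: "a \<longlonglongrightarrow> 0"
  shows "(\<lambda>k. \<Sum>n. L k n * a n) \<longlonglongrightarrow> (\<Sum>n. \<mu> n * a n)"
proof (rule LIMSEQ_I)
  fix r :: real assume "0 < r"
  obtain B where B: "\<And>n. \<bar>a n\<bar> \<le> B"
    using convergent_imp_Bseq[OF convergentI[OF a]] by (metis BseqE real_norm_def)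
  obtain N where N: "\<And>n. N \<le> n \<Longrightarrow> \<bar>a n\<bar> \<le> r / 3"
    using LIMSEQ_D[OF a, of "r / 3"] \<open>0 < r\<close> by (auto intro: less_imp_le)
  \<comment> \<open>the first \<open>N\<close> terms converge, the tails are uniformly small\<close>
  have "(\<lambda>k. \<Sum>n<N. L k n * a n) \<longlonglongrightarrow> (\<Sum>n<N. \<mu> n * a n)"
    by (intro tendsto_sum tendsto_mult pointwise tendsto_const)
  then obtain K where K: "\<And>k. K \<le> k \<Longrightarrow> \<bar>(\<Sum>n<N. L k n * a n) - (\<Sum>n<N. \<mu> n * a n)\<bar> < r / 3"
    using LIMSEQ_D[of _ "\<Sum>n<N. \<mu> n * a n" "r / 3"] \<open>0 < r\<close> by auto
  have tail_L: "\<bar>(\<Sum>n. L k n * a n) - (\<Sum>n<N. L k n * a n)\<bar> \<le> r / 3" for k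
    using L B N by (rule subprob_weights_tail)
  have tail_\<mu>: "\<bar>(\<Sum>n. \<mu> n * a n) - (\<Sum>n<N. \<mu> n * a n)\<bar> \<le> r / 3"
    using \<mu> B N by (rule subprob_weights_tail)
  have "\<bar>(\<Sum>n. L k n * a n) - (\<Sum>n. \<mu> n * a n)\<bar> < r" if "K \<le> k" for k
    using tail_L[of k] tail_\<mu> K[OF that] by linarith
  then show "\<exists>K. \<forall>k\<ge>K. norm ((\<Sum>n. L k n * a n) - (\<Sum>n. \<mu> n * a n)) < r" by auto
qed

lemma bounded_linear_series_combination:
  fixes t :: "nat \<Rightarrow> 'a::banach"
  assumes \<phi>: "bounded_linear \<phi>" and l: "subprob_weights l" and t: "\<And>n. norm (t n - x) \<le> B"
  shows "\<phi> (series_combination x t l) = \<phi> x + (\<Sum>n. l n * (\<phi> (t n) - \<phi> x))"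
proof -
  have "\<phi> (\<Sum>n. l n *\<^sub>R (t n - x)) = (\<Sum>n. \<phi> (l n *\<^sub>R (t n - x)))"
    by (rule bounded_linear.suminf[OF \<phi> summable_subprob_weights_scaleR[OF l t]])
  also have "\<dots> = (\<Sum>n. l n * (\<phi> (t n) - \<phi> x))"
    using \<phi> by (simp add: linear_simps)
  finally show ?thesis
    unfolding series_combination_def using \<phi> by (simp add: linear_simps)
qed

lemma convex_series_hull:
  fixes t :: "nat \<Rightarrow> 'a::banach"
  assumes t: "\<And>n. norm (t n - x) \<le> B"
  shows "convex (series_hull x t)"
proof (rule convexI)
  fix p q :: 'a and u w :: real
  assume "p \<in> series_hull x t" "q \<in> series_hull x t" and u: "0 \<le> u" and w: "0 \<le> w" and "u + w = 1"
  then obtain l1 l2 where l1: "subprob_weights l1" "p = series_combination x t l1"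
    and l2: "subprob_weights l2" "q = series_combination x t l2"
    unfolding series_hull_def by blast
  define l where "l n = u * l1 n + w * l2 n" for n
  have "subprob_weights l"
    unfolding subprob_weights_def
  proof (intro conjI allI)
    show "0 \<le> l n" for n
      using l1(1) l2(1) u w unfolding subprob_weights_def l_def by simp
    show "sum l {..<M} \<le> 1" for M
    proof -
      have "sum l {..<M} = u * sum l1 {..<M} + w * sum l2 {..<M}"
        unfolding l_def by (simp add: sum.distrib sum_distrib_left)
      also have "\<dots> \<le> u * 1 + w * 1"
        using l1(1) l2(1) u w unfolding subprob_weights_def by (intro add_mono mult_left_mono) auto
      finally show ?thesis using \<open>u + w = 1\<close> by simp
    qed
  qed
  moreover have "u *\<^sub>R p + w *\<^sub>R q = series_combination x t l"
  proof -
    have s1: "summable (\<lambda>n. l1 n *\<^sub>R (t n - x))" and s2: "summable (\<lambda>n. l2 n *\<^sub>R (t n - x))"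
      using summable_subprob_weights_scaleR[OF l1(1) t] summable_subprob_weights_scaleR[OF l2(1) t] .
    have "u *\<^sub>R p + w *\<^sub>R q
        = (u + w) *\<^sub>R x + (u *\<^sub>R (\<Sum>n. l1 n *\<^sub>R (t n - x)) + w *\<^sub>R (\<Sum>n. l2 n *\<^sub>R (t n - x)))"
      unfolding l1(2) l2(2) series_combination_def by (simp add: algebra_simps)
    also have "u *\<^sub>R (\<Sum>n. l1 n *\<^sub>R (t n - x)) + w *\<^sub>R (\<Sum>n. l2 n *\<^sub>R (t n - x))
        = (\<Sum>n. l n *\<^sub>R (t n - x))"
      using suminf_add[OF summable_scaleR_right[OF s1, of u] summable_scaleR_right[OF s2, of w]]
      by (simp add: suminf_scaleR_right[OF s1] suminf_scaleR_right[OF s2] l_def scaleR_add_left)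
    finally show ?thesis unfolding series_combination_def using \<open>u + w = 1\<close> by simp
  qed
  ultimately show "u *\<^sub>R p + w *\<^sub>R q \<in> series_hull x t"
    unfolding series_hull_def by blast
qed

lemma subprob_weights_subseq:
  fixes \<Lambda> :: "nat \<Rightarrow> nat \<Rightarrow> real"
  assumes \<Lambda>: "\<And>k. subprob_weights (\<Lambda> k)"
  shows "\<exists>r \<mu>. strict_mono r \<and> subprob_weights \<mu> \<and> (\<forall>n. (\<lambda>k. \<Lambda> (r k) n) \<longlonglongrightarrow> \<mu> n)"
proof -
  \<comment> \<open>Tychonoff: the cube \<open>[0,1]\<^sup>\<nat>\<close> is a compact metric space in the product topology\<close>
  have "compact (Pi\<^sub>E UNIV (\<lambda>_::nat. {0..1::real}))"
    using compactin_PiE[of "\<lambda>_. euclidean" UNIV "\<lambda>_::nat. {0..1::real}"]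
    by (simp add: euclidean_product_topology)
  then have cube: "seq_compact (Pi\<^sub>E UNIV (\<lambda>_::nat. {0..1::real}))"
    by (rule compact_imp_seq_compact)
  have in_cube: "\<forall>k. \<Lambda> k \<in> Pi\<^sub>E UNIV (\<lambda>_. {0..1})"
    using \<Lambda> subprob_weights_le_1[OF \<Lambda>] unfolding subprob_weights_def by auto
  obtain \<mu> r where "\<mu> \<in> Pi\<^sub>E UNIV (\<lambda>_. {0..1})" and r: "strict_mono r" and lim: "(\<Lambda> \<circ> r) \<longlonglongrightarrow> \<mu>"
    by (rule seq_compactE[OF cube in_cube])
  have pointwise: "(\<lambda>k. \<Lambda> (r k) n) \<longlonglongrightarrow> \<mu> n" for n
    using continuous_on_tendsto_compose[OF continuous_on_product_coordinates lim] by (simp add: comp_def)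
  have "subprob_weights \<mu>"
    unfolding subprob_weights_def
  proof (intro conjI allI)
    show "0 \<le> \<mu> n" for n
      using \<Lambda> unfolding subprob_weights_def by (intro LIMSEQ_le_const[OF pointwise]) auto
    show "sum \<mu> {..<M} \<le> 1" for M
      using \<Lambda> unfolding subprob_weights_def
      by (intro LIMSEQ_le_const2[OF tendsto_sum[OF pointwise]]) auto
  qed
  with r pointwise show ?thesis by blast
qed

lemma series_combination_mem_series_hull: "subprob_weights l \<Longrightarrow> series_combination x t l \<in> series_hull x t"
  unfolding series_hull_def by blast

lemma base_mem_series_hull: "x \<in> series_hull x t"
proof -
  have "subprob_weights (\<lambda>_. 0)"
    unfolding subprob_weights_def by simp
  moreover have "series_combination x t (\<lambda>_. 0) = x"
    unfolding series_combination_def by simp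
  ultimately show ?thesis
    using series_combination_mem_series_hull by metis
qed

lemma vertex_mem_series_hull: "t k \<in> series_hull x t"
proof -
  define l where "l n = (if n = k then 1 else 0 :: real)" for n
  have "subprob_weights l"
    unfolding subprob_weights_def l_def by (simp add: sum.delta)
  moreover have "(\<lambda>n. l n *\<^sub>R (t n - x)) = (\<lambda>n. if n = k then t k - x else 0)"
    by (simp add: l_def fun_eq_iff)
  then have "(\<lambda>n. l n *\<^sub>R (t n - x)) sums (t k - x)"
    using sums_single[of k "\<lambda>_. t k - x"] by simp
  then have "series_combination x t l = t k"
    unfolding series_combination_def by (simp add: sums_iff)
  ultimately show ?thesis
    using series_combination_mem_series_hull by metis
qed

lemma series_hull_level:
  fixes t :: "nat \<Rightarrow> 'a::banach" and \<psi> :: "'a \<Rightarrow> real"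
  assumes "bounded_linear \<psi>" "\<psi> x = c" "\<And>n. \<psi> (t n) = c" "\<And>n. norm (t n - x) \<le> B"
    and "v \<in> series_hull x t"
  shows "\<psi> v = c"
  using assms bounded_linear_series_combination[OF assms(1) _ assms(4)]
  unfolding series_hull_def by auto

lemma weakly_convergent_to_series_combination:
  fixes t :: "nat \<Rightarrow> 'a::banach"
  assumes t: "\<And>n. norm (t n - x) \<le> B" and weak: "weakly_convergent_to t x"
    and \<Lambda>: "\<And>k. subprob_weights (\<Lambda> k)" and \<mu>: "subprob_weights \<mu>"
    and pointwise: "\<And>n. (\<lambda>k. \<Lambda> k n) \<longlonglongrightarrow> \<mu> n"
  shows "weakly_convergent_to (\<lambda>k. series_combination x t (\<Lambda> k)) (series_combination x t \<mu>)"
  unfolding weakly_convergent_to_def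
proof (intro allI impI)
  fix \<phi> :: "'a \<Rightarrow> real" assume \<phi>: "bounded_linear \<phi>"
  have "(\<lambda>n. \<phi> (t n) - \<phi> x) \<longlonglongrightarrow> 0"
    using weakly_convergent_toD[OF weak \<phi>] by (rule LIM_zero)
  then have "(\<lambda>k. \<Sum>n. \<Lambda> k n * (\<phi> (t n) - \<phi> x)) \<longlonglongrightarrow> (\<Sum>n. \<mu> n * (\<phi> (t n) - \<phi> x))"
    by (rule tendsto_suminf_subprob_weights[OF \<Lambda> \<mu> pointwise])
  then have "(\<lambda>k. \<phi> x + (\<Sum>n. \<Lambda> k n * (\<phi> (t n) - \<phi> x)))
      \<longlonglongrightarrow> \<phi> x + (\<Sum>n. \<mu> n * (\<phi> (t n) - \<phi> x))"
    by (intro tendsto_add tendsto_const)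
  then show "(\<lambda>k. \<phi> (series_combination x t (\<Lambda> k))) \<longlonglongrightarrow> \<phi> (series_combination x t \<mu>)"
    using bounded_linear_series_combination[OF \<phi> \<Lambda> t] bounded_linear_series_combination[OF \<phi> \<mu> t]
    by simp
qed

lemma weakly_seq_compact_series_hull:
  fixes t :: "nat \<Rightarrow> 'a::banach"
  assumes t: "\<And>n. norm (t n - x) \<le> B" and weak: "weakly_convergent_to t x"
  shows "weakly_seq_compact (series_hull x t)"
  unfolding weakly_seq_compact_def
proof (intro allI impI)
  fix s :: "nat \<Rightarrow> 'a" assume "\<forall>k. s k \<in> series_hull x t"
  then have "\<exists>l. subprob_weights l \<and> s k = series_combination x t l" for k
    unfolding series_hull_def by blast
  then obtain \<Lambda> where \<Lambda>: "\<And>k. subprob_weights (\<Lambda> k)" and s: "\<And>k. s k = series_combination x t (\<Lambda> k)"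
    by metis
  obtain r :: "nat \<Rightarrow> nat" and \<mu> where r: "strict_mono r" and \<mu>: "subprob_weights \<mu>"
    and pointwise: "\<And>n. (\<lambda>k. \<Lambda> (r k) n) \<longlonglongrightarrow> \<mu> n"
    using subprob_weights_subseq[of \<Lambda>] \<Lambda> by blast
  have "weakly_convergent_to (s \<circ> r) (series_combination x t \<mu>)"
    using weakly_convergent_to_series_combination[OF t weak \<Lambda> \<mu> pointwise] by (simp add: s comp_def)
  then show "\<exists>r::nat \<Rightarrow> nat. \<exists>y\<in>series_hull x t. strict_mono r \<and> weakly_convergent_to (s \<circ> r) y"
    using r series_combination_mem_series_hull[OF \<mu>] by blast
qed

lemma INF_norm_series_hull:
  fixes t :: "nat \<Rightarrow> 'a::banach" and \<psi> :: "'a \<Rightarrow> real"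
  assumes \<psi>: "bounded_linear \<psi>" "\<And>z. \<bar>\<psi> z\<bar> \<le> norm z" "\<psi> x = 1" "\<And>n. \<psi> (t n) = 1"
    and x: "norm x = 1" and t: "\<And>n. norm (t n - x) \<le> B"
  shows "(INF v\<in>series_hull x t. norm v) = 1"
proof (rule antisym)
  have "1 \<le> norm v" if "v \<in> series_hull x t" for v
    using series_hull_level[OF \<psi>(1,3,4) t that] \<psi>(2)[of v] by simp
  then show "1 \<le> (INF v\<in>series_hull x t. norm v)"
    using base_mem_series_hull[of x t] by (intro cINF_greatest) auto
  have "bdd_below (norm ` series_hull x t)"
    by (rule bdd_belowI[of _ 0]) auto
  then show "(INF v\<in>series_hull x t. norm v) \<le> 1"
    using cINF_lower[OF _ base_mem_series_hull, of norm x t] x by simp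
qed

section \<open>Failure of the Kadec--Klee property\<close>

lemma weakly_seq_compact_imp_weak_SACP_cwm: "weakly_seq_compact V \<Longrightarrow> weak_SACP_cwm V"
  unfolding weakly_seq_compact_def weak_SACP_cwm_def SACP_cwm_def by blast

text \<open>The instance \<open>F = {0}\<close>, \<open>f \<phi> = \<phi> 0\<close> of the SACP.\<close>

lemma SACP_cwm_norm_minimizing:
  fixes V :: "'a::real_normed_vector set"
  assumes sacp: "SACP_cwm conv V" and t: "\<And>k. t k \<in> V"
    and minimizing: "(\<lambda>k. norm (t k)) \<longlonglongrightarrow> (INF v\<in>V. norm v)"
  shows "\<exists>g z. strict_mono g \<and> conv (t \<circ> g) z"
proof -
  define f0 where "f0 = (\<lambda>\<phi>::'a \<Rightarrow> real. \<phi> 0)"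
  have f0: "f0 \<in> F_cwm {0}"
    unfolding F_cwm_def linf_plus_def f0_def by auto
  have r_f0: "r_f f0 v {0} = norm v" for v
    unfolding r_f_def f0_def by simp
  have "(\<forall>n. t n \<in> V) \<and> (\<lambda>n. r_f f0 (t n) {0}) \<longlonglongrightarrow> rad_f f0 V {0}"
    using t minimizing by (simp add: r_f0 rad_f_def)
  then show ?thesis
    using sacp[unfolded SACP_cwm_def, rule_format, of "{0}" f0 t] f0 by simp
qed

lemma not_tendsto_subseq_bounded_away:
  fixes s :: "nat \<Rightarrow> 'a::metric_space"
  assumes "\<not> s \<longlonglongrightarrow> x" "eventually P sequentially"
  shows "\<exists>\<epsilon>>0. \<exists>h::nat \<Rightarrow> nat. strict_mono h \<and> (\<forall>k. \<epsilon> \<le> dist (s (h k)) x \<and> P (h k))"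
proof -
  obtain \<epsilon> where "0 < \<epsilon>" and not_close: "\<not> eventually (\<lambda>n. dist (s n) x < \<epsilon>) sequentially"
    using assms(1) unfolding tendsto_iff by blast
  have "\<not> eventually (\<lambda>n. dist (s n) x < \<epsilon> \<or> \<not> P n) sequentially"
  proof
    assume "eventually (\<lambda>n. dist (s n) x < \<epsilon> \<or> \<not> P n) sequentially"
    with assms(2) have "eventually (\<lambda>n. dist (s n) x < \<epsilon>) sequentially"
      by eventually_elim auto
    with not_close show False ..
  qed
  then show ?thesis
    using not_eventually_sequentiallyD \<open>0 < \<epsilon>\<close> by (fastforce simp: not_less)
qed

lemma not_kadec_klee_sequence:
  assumes "\<not> kadec_klee TYPE('a)"
  obtains \<psi> :: "'a::real_normed_vector \<Rightarrow> real" and x :: 'a and t :: "nat \<Rightarrow> 'a"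
  where "bounded_linear \<psi>" "\<And>z. \<bar>\<psi> z\<bar> \<le> norm z" "\<psi> x = 1" "norm x = 1"
    "\<And>k. \<psi> (t k) = 1" "weakly_convergent_to t x" "(\<lambda>k. norm (t k)) \<longlonglongrightarrow> 1"
    "\<And>g z. strict_mono g \<Longrightarrow> \<not> (t \<circ> g) \<longlonglongrightarrow> z"
proof -
  obtain x :: 'a and s where x: "norm x = 1" and s: "\<And>n. norm (s n) = 1"
    and weak: "weakly_convergent_to s x" and not_tendsto: "\<not> s \<longlonglongrightarrow> x"
    using assms unfolding kadec_klee_def by blast
  obtain \<psi> :: "'a \<Rightarrow> real" where \<psi>: "bounded_linear \<psi>" and \<psi>_le: "\<And>z. \<bar>\<psi> z\<bar> \<le> norm z"
    and \<psi>x: "\<psi> x = 1"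
    using norming_functional[of x] x by auto
  have \<psi>s: "(\<lambda>n. \<psi> (s n)) \<longlonglongrightarrow> 1"
    using weakly_convergent_toD[OF weak \<psi>] \<psi>x by simp
  \<comment> \<open>a subsequence staying away from \<open>x\<close>, rescaled onto the hyperplane \<open>\<psi> = 1\<close>\<close>
  obtain \<epsilon> and h :: "nat \<Rightarrow> nat" where "0 < \<epsilon>" and h: "strict_mono h"
    and far: "\<And>k. \<epsilon> \<le> dist (s (h k)) x" and pos: "\<And>k. 0 < \<psi> (s (h k))"
    using not_tendsto_subseq_bounded_away[OF not_tendsto order_tendstoD(1)[OF \<psi>s, of 0]] by auto
  define t where "t k = (1 / \<psi> (s (h k))) *\<^sub>R s (h k)" for k
  have c: "(\<lambda>k. \<psi> (s (h k))) \<longlonglongrightarrow> 1"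
    using LIMSEQ_subseq_LIMSEQ[OF \<psi>s h] by (simp add: comp_def)
  then have inv_c: "(\<lambda>k. 1 / \<psi> (s (h k))) \<longlonglongrightarrow> 1"
    using tendsto_divide[OF tendsto_const c, of 1] by simp
  have "\<psi> (t k) = 1" for k
    using pos[of k] \<psi> by (simp add: t_def linear_simps)
  moreover have weak_t: "weakly_convergent_to t x"
    using weakly_convergent_to_scaleR[OF inv_c weakly_convergent_to_subseq[OF weak h]]
    by (simp add: t_def[abs_def] comp_def)
  moreover have "(\<lambda>k. norm (t k)) \<longlonglongrightarrow> 1"
    using inv_c pos by (simp add: t_def s less_imp_le)
  moreover have "\<not> (t \<circ> g) \<longlonglongrightarrow> z" if g: "strict_mono g" for g z
  proof
    assume tg: "(t \<circ> g) \<longlonglongrightarrow> z"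
    then have "(\<lambda>k. \<psi> (s (h (g k))) *\<^sub>R t (g k)) \<longlonglongrightarrow> 1 *\<^sub>R x"
      using LIMSEQ_subseq_LIMSEQ[OF c g] tendsto_subseq_eq_weak_limit[OF weak_t g tg]
      by (intro tendsto_scaleR) (auto simp: comp_def)
    moreover have "\<psi> (s (h (g k))) *\<^sub>R t (g k) = s (h (g k))" for k
      using pos[of "g k"] by (simp add: t_def)
    ultimately have "(\<lambda>k. s (h (g k))) \<longlonglongrightarrow> x" by simp
    then obtain k where "dist (s (h (g k))) x < \<epsilon>"
      using \<open>0 < \<epsilon>\<close> by (meson LIMSEQ_iff_nz dist_norm order_refl)
    with far show False by (simp add: not_less[symmetric])
  qed
  ultimately show ?thesis
    using that \<psi> \<psi>_le \<psi>x x by blast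
qed

lemma not_kadec_klee_counterexample:
  assumes "\<not> kadec_klee TYPE('a)"
  obtains V :: "'a::banach set" where "V \<noteq> {}" "closed V" "convex V" "weak_SACP_cwm V" "\<not> norm_SACP_cwm V"
proof -
  obtain \<psi> :: "'a \<Rightarrow> real" and x :: 'a and t :: "nat \<Rightarrow> 'a"
    where \<psi>: "bounded_linear \<psi>" "\<And>z. \<bar>\<psi> z\<bar> \<le> norm z" "\<psi> x = 1" "\<And>k. \<psi> (t k) = 1"
    and x: "norm x = 1" and weak: "weakly_convergent_to t x" and norms: "(\<lambda>k. norm (t k)) \<longlonglongrightarrow> 1"
    and no_subseq: "\<And>g z. strict_mono g \<Longrightarrow> \<not> (t \<circ> g) \<longlonglongrightarrow> z"
    using not_kadec_klee_sequence[OF assms] by metis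
  obtain K where K: "\<And>k. norm (t k) \<le> K"
    using convergent_imp_Bseq[OF convergentI[OF norms]] by (metis BseqE real_norm_def abs_norm_cancel)
  have bounded: "norm (t k - x) \<le> K + 1" for k
    using norm_triangle_ineq4[of "t k" x] K[of k] x by simp
  define V where "V = series_hull x t"
  have "\<not> norm_SACP_cwm V"
  proof
    assume "norm_SACP_cwm V"
    then have "\<exists>g z. strict_mono g \<and> (t \<circ> g) \<longlonglongrightarrow> z"
      unfolding norm_SACP_cwm_def
      by (rule SACP_cwm_norm_minimizing)
        (use vertex_mem_series_hull norms INF_norm_series_hull[OF \<psi> x bounded] in \<open>auto simp: V_def\<close>)
    with no_subseq show False by blast
  qed
  moreover have "weakly_seq_compact V"
    unfolding V_def using bounded weak by (rule weakly_seq_compact_series_hull)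
  moreover have "convex V"
    unfolding V_def using bounded by (rule convex_series_hull)
  moreover have "V \<noteq> {}"
    using base_mem_series_hull unfolding V_def by blast
  ultimately show ?thesis
    using that weakly_seq_compact_imp_closed weakly_seq_compact_imp_weak_SACP_cwm by blast
qed

theorem proposition2p8:
  "kadec_klee TYPE('a::banach) \<longleftrightarrow>
     (\<forall>V::'a set. V \<noteq> {} \<and> closed V \<and> convex V \<longrightarrow>
        weak_SACP_cwm V \<longrightarrow> norm_SACP_cwm V)"
proof
  assume "kadec_klee TYPE('a)"
  then show "\<forall>V::'a set. V \<noteq> {} \<and> closed V \<and> convex V \<longrightarrow> weak_SACP_cwm V \<longrightarrow> norm_SACP_cwm V"
    using kadec_klee_imp_norm_SACP_cwm by blast
next
  assume "\<forall>V::'a set. V \<noteq> {} \<and> closed V \<and> convex V \<longrightarrow> weak_SACP_cwm V \<longrightarrow> norm_SACP_cwm V"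
  then show "kadec_klee TYPE('a)"
    using not_kadec_klee_counterexample by metis
qed

end
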